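(* Let $T=((\Omega,\mathcal{A}),\{(\Omega,\mathcal{M}_i)\}_{i\in N},\{t_i\}_{i\in N})$ be a type space. If $T$ admits a money pump then it admits a universal money pump; and if $T$ admits a universal money pump then it admits a strong money pump.
   Context: A field on a set $X$ is a collection of subsets of $X$ containing $X$ and closed under complements and finite intersections. For a field $\mathcal{A}$ on $\Omega$, $\mathrm{pba}(\Omega,\mathcal{A})$ is the set of finitely additive nonnegative $P:\mathcal{A}\to\mathbb{R}$ with $P(\Omega)=1$; $B(\Omega,\mathcal{A})$ the sup-norm closure of the linear span of indicators of sets in $\mathcal{A}$; bounded finitely additive set functions carry the weak* topology (weakest making $\mu\mapsto\int f\,d\mu$ continuous for all $f\in B(\Omega,\mathcal{A})$), $\overline{\,\cdot\,}^\ast$ denotes weak* closure. A type space: $N$ a nonempty set of players, fields $\mathcal{M}_i\subseteq\mathcal{A}$ on a set $\Omega$, $t_i:\Omega\times\mathcal{A}\to[0,1]$ with $t_i(\omega,\cdot)\in\mathrm{pba}(\Omega,\mathcal{A})$, $t_i(\cdot,E)\in B(\Omega,\mathcal{M}_i)$ for $E\in\mathcal{A}$, and $t_i(\omega,E)=1$ whenever $E\in\mathcal{M}_i$, $\omega\in E$. $\Pi_i=\overline{\mathrm{conv}\{t_i(\omega,\cdot):\omega\in\Omega\}}^\ast$. For $I\subseteq N$, a nonempty $S\subseteq\Omega$ is an $I$-common certainty component if there is $E\in\mathcal{A}$, $E\subseteq S$, with $t_i(\omega,E)=1$ for all $\omega\in S$, $i\in I$; a set $E$ is $I$-commonly certain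 at $\omega$ if there is such $S$ with $\omega\in S\subseteq E$. A semi-bet is $(f_i)_{i\in I}\subseteq B(\Omega,\mathcal{A})$, $I\subseteq N$ finite, such that for every $\omega$ the set $\{\omega':\int f_i\,dt_i(\omega',\cdot)\ge0\ \forall i\in I\}$ is $I$-commonly certain at $\omega$. $T$ admits a money pump if for every $P\in\mathrm{pba}(\Omega,\mathcal{A})$ there is a semi-bet $(f_i)_{i\in I}$ with $\int\sum_{i\in I}f_i\,dP<0$. $T$ admits a universal money pump if there exist a finite $I\subseteq N$ and an $I$-common certainty component $S$ such that for every $P\in\mathrm{pba}(\Omega,\mathcal{A})$ with $\inf\{P(E):E\in\mathcal{A},S\subseteq E\}>0$ there is a semi-bet $(f_i)_{i\in I}$ with $\int\sum_{i\in I}f_i\,dP<0$. $T$ admits a strong money pump if there is a finite $I\subseteq N$ such that for every $P\in\mathrm{pba}(\Omega,\mathcal{A})$ there is a semi-bet $(f_i)_{i\in I}$ with $\int\sum_{i\in I}f_i\,dP\le0$ and some $P^\ast\in\{P\}\cup\bigcup_{i\in I}\Pi_i$ with $\int\sum_{i\in I}f_i\,dP^\ast\ne0$. *)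

theory Defs
  imports "HOL-Analysis.Analysis"
begin

text \<open>The state space Omega is the universe of the type 'w; set functions are
  maps 'w set => real which vanish off the field (convention).\<close>

definition is_field :: "'w set set \<Rightarrow> bool" where
  "is_field A \<longleftrightarrow> UNIV \<in> A \<and> (\<forall>E\<in>A. - E \<in> A) \<and> (\<forall>E\<in>A. \<forall>F\<in>A. E \<inter> F \<in> A)"

definition fin_additive :: "'w set set \<Rightarrow> ('w set \<Rightarrow> real) \<Rightarrow> bool" where
  "fin_additive A \<mu> \<longleftrightarrow> (\<forall>E\<in>A. \<forall>F\<in>A. E \<inter> F = {} \<longrightarrow> \<mu> (E \<union> F) = \<mu> E + \<mu> F)"

definition ba :: "'w set set \<Rightarrow> ('w set \<Rightarrow> real) set" where
  "ba A = {\<mu>. (\<forall>E. E \<notin> A \<longrightarrow> \<mu> E = 0) \<and> fin_additive A \<mu> \<and> (\<exists>K. \<forall>E\<in>A. \<bar>\<mu> E\<bar> \<le> K)}"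

definition pba :: "'w set set \<Rightarrow> ('w set \<Rightarrow> real) set" where
  "pba A = {P. (\<forall>E. E \<notin> A \<longrightarrow> P E = 0) \<and> (\<forall>E\<in>A. 0 \<le> P E) \<and> fin_additive A P \<and> P UNIV = 1}"

definition simple_fns :: "'w set set \<Rightarrow> ('w \<Rightarrow> real) set" where
  "simple_fns A = {g. \<exists>F c. finite F \<and> F \<subseteq> A \<and> g = (\<lambda>x. \<Sum>E\<in>F. c E * indicator E x)}"

definition Bfun :: "'w set set \<Rightarrow> ('w \<Rightarrow> real) set" where
  "Bfun A = {f. \<forall>\<epsilon>>0. \<exists>g\<in>simple_fns A. \<forall>x. \<bar>f x - g x\<bar> < \<epsilon>}"

definition fa_integral :: "'w set set \<Rightarrow> ('w set \<Rightarrow> real) \<Rightarrow> ('w \<Rightarrow> real) \<Rightarrow> real" where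
  "fa_integral A \<mu> f = (THE r. \<forall>\<epsilon>>0. \<exists>\<delta>>0. \<forall>F c. finite F \<and> F \<subseteq> A \<and>
       (\<forall>x. \<bar>f x - (\<Sum>E\<in>F. c E * indicator E x)\<bar> < \<delta>) \<longrightarrow>
       \<bar>(\<Sum>E\<in>F. c E * \<mu> E) - r\<bar> < \<epsilon>)"

definition weak_star_top :: "'w set set \<Rightarrow> ('w set \<Rightarrow> real) topology" where
  "weak_star_top A = topology_generated_by
     {{\<mu> \<in> ba A. fa_integral A \<mu> f \<in> U} | f U. f \<in> Bfun A \<and> open U}"

definition conv_hull_sf :: "('w set \<Rightarrow> real) set \<Rightarrow> ('w set \<Rightarrow> real) set" where
  "conv_hull_sf C = {\<mu>. \<exists>(n::nat) w \<nu>. (\<forall>k<n. 0 \<le> w k \<and> \<nu> k \<in> C) \<and> (\<Sum>k<n. w k) = 1 \<and>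
       \<mu> = (\<lambda>E. \<Sum>k<n. w k * \<nu> k E)}"

definition Pi_set :: "'w set set \<Rightarrow> ('i \<Rightarrow> 'w \<Rightarrow> 'w set \<Rightarrow> real) \<Rightarrow> 'i \<Rightarrow> ('w set \<Rightarrow> real) set" where
  "Pi_set A t i = (weak_star_top A) closure_of (conv_hull_sf {t i \<omega> | \<omega>. True})"

definition type_space :: "'i set \<Rightarrow> 'w set set \<Rightarrow> ('i \<Rightarrow> 'w set set) \<Rightarrow> ('i \<Rightarrow> 'w \<Rightarrow> 'w set \<Rightarrow> real) \<Rightarrow> bool" where
  "type_space N A M t \<longleftrightarrow> N \<noteq> {} \<and> is_field A \<and>
     (\<forall>i\<in>N. is_field (M i) \<and> M i \<subseteq> A) \<and>
     (\<forall>i\<in>N. \<forall>\<omega>. t i \<omega> \<in> pba A \<and> (\<forall>E. 0 \<le> t i \<omega> E \<and> t i \<omega> E \<le> 1)) \<and>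
     (\<forall>i\<in>N. \<forall>E\<in>A. (\<lambda>\<omega>. t i \<omega> E) \<in> Bfun (M i)) \<and>
     (\<forall>i\<in>N. \<forall>E\<in>M i. \<forall>\<omega>\<in>E. t i \<omega> E = 1)"

definition cc_component :: "'w set set \<Rightarrow> ('i \<Rightarrow> 'w \<Rightarrow> 'w set \<Rightarrow> real) \<Rightarrow> 'i set \<Rightarrow> 'w set \<Rightarrow> bool" where
  "cc_component A t I S \<longleftrightarrow> S \<noteq> {} \<and> (\<exists>E\<in>A. E \<subseteq> S \<and> (\<forall>\<omega>\<in>S. \<forall>i\<in>I. t i \<omega> E = 1))"

definition commonly_certain :: "'w set set \<Rightarrow> ('i \<Rightarrow> 'w \<Rightarrow> 'w set \<Rightarrow> real) \<Rightarrow> 'i set \<Rightarrow> 'w set \<Rightarrow> 'w \<Rightarrow> bool" where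
  "commonly_certain A t I E \<omega> \<longleftrightarrow> (\<exists>S. cc_component A t I S \<and> \<omega> \<in> S \<and> S \<subseteq> E)"

definition semi_bet :: "'i set \<Rightarrow> 'w set set \<Rightarrow> ('i \<Rightarrow> 'w \<Rightarrow> 'w set \<Rightarrow> real) \<Rightarrow> 'i set \<Rightarrow> ('i \<Rightarrow> 'w \<Rightarrow> real) \<Rightarrow> bool" where
  "semi_bet N A t I f \<longleftrightarrow> finite I \<and> I \<subseteq> N \<and> (\<forall>i\<in>I. f i \<in> Bfun A) \<and>
     (\<forall>\<omega>. commonly_certain A t I {\<omega>'. \<forall>i\<in>I. fa_integral A (t i \<omega>') (f i) \<ge> 0} \<omega>)"

definition money_pump :: "'i set \<Rightarrow> 'w set set \<Rightarrow> ('i \<Rightarrow> 'w \<Rightarrow> 'w set \<Rightarrow> real) \<Rightarrow> bool" where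
  "money_pump N A t \<longleftrightarrow> (\<forall>P\<in>pba A. \<exists>I f. semi_bet N A t I f \<and>
       fa_integral A P (\<lambda>\<omega>. \<Sum>i\<in>I. f i \<omega>) < 0)"

definition universal_money_pump :: "'i set \<Rightarrow> 'w set set \<Rightarrow> ('i \<Rightarrow> 'w \<Rightarrow> 'w set \<Rightarrow> real) \<Rightarrow> bool" where
  "universal_money_pump N A t \<longleftrightarrow> (\<exists>I S. finite I \<and> I \<subseteq> N \<and> cc_component A t I S \<and>
     (\<forall>P\<in>pba A. Inf {P E | E. E \<in> A \<and> S \<subseteq> E} > 0 \<longrightarrow>
        (\<exists>f. semi_bet N A t I f \<and> fa_integral A P (\<lambda>\<omega>. \<Sum>i\<in>I. f i \<omega>) < 0)))"

definition strong_money_pump :: "'i set \<Rightarrow> 'w set set \<Rightarrow> ('i \<Rightarrow> 'w \<Rightarrow> 'w set \<Rightarrow> real) \<Rightarrow> bool" where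
  "strong_money_pump N A t \<longleftrightarrow> (\<exists>I. finite I \<and> I \<subseteq> N \<and>
     (\<forall>P\<in>pba A. \<exists>f. semi_bet N A t I f \<and> fa_integral A P (\<lambda>\<omega>. \<Sum>i\<in>I. f i \<omega>) \<le> 0 \<and>
        (\<exists>P'\<in>{P} \<union> (\<Union>i\<in>I. Pi_set A t i). fa_integral A P' (\<lambda>\<omega>. \<Sum>i\<in>I. f i \<omega>) \<noteq> 0)))"

end

theory Submission
  imports Defs
begin

text \<open>Since \<open>UNIV\<close> is a common certainty component, a semi-bet is simply a bet that every bettor
  accepts in every state.

  Money pump implies universal money pump: otherwise, for every finite set \<open>J\<close> of players some
  \<open>P\<^sub>J\<close> gives every semi-bet among \<open>J\<close> a nonnegative expectation.  By Tychonoff the net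
  \<open>(P\<^sub>J)\<close> has a setwise cluster point \<open>P\<close>, again a finitely additive probability, and as
  integrals depend continuously on finitely many values of the measure, no semi-bet loses money
  under \<open>P\<close>: this contradicts the money pump at \<open>P\<close>.

  Universal implies strong money pump, for the bettors \<open>I\<close> and component \<open>S\<close> of the universal pump:
  if some belief \<open>t j \<omega>\<close> (\<open>j \<in> I\<close>) is not a prior for some \<open>k \<in> I\<close>, then for some event \<open>F\<close> the
  bet \<open>\<plusminus>(indicator F - t k \<cdot> F)\<close> offered to \<open>k\<close> alone is a semi-bet with nonpositive
  expectation under any given \<open>P\<close> and nonzero expectation under \<open>t j \<omega> \<in> \<Pi>\<^sub>j\<close>.  Otherwise the
  belief \<open>t j \<omega>\<^sub>0\<close> at some \<open>\<omega>\<^sub>0 \<in> S\<close> is a common prior of \<open>I\<close> that is certain of \<open>S\<close>;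
  by the tower property no semi-bet has negative expectation under it, contradicting universality.\<close>

lemma is_field_UNIV: "is_field A \<Longrightarrow> UNIV \<in> A"
  and is_field_Compl: "is_field A \<Longrightarrow> E \<in> A \<Longrightarrow> - E \<in> A"
  and is_field_Int: "is_field A \<Longrightarrow> E \<in> A \<Longrightarrow> F \<in> A \<Longrightarrow> E \<inter> F \<in> A"
  by (simp_all add: is_field_def)

lemma is_field_empty: "is_field A \<Longrightarrow> {} \<in> A"
  using is_field_Compl[OF _ is_field_UNIV] by fastforce

lemma is_field_Un: "is_field A \<Longrightarrow> E \<in> A \<Longrightarrow> F \<in> A \<Longrightarrow> E \<union> F \<in> A"
  using is_field_Compl[of A "- E \<inter> - F"] by (simp add: is_field_Int is_field_Compl)

lemma is_field_Diff: "is_field A \<Longrightarrow> E \<in> A \<Longrightarrow> F \<in> A \<Longrightarrow> E - F \<in> A"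
  by (simp add: Diff_eq is_field_Int is_field_Compl)

lemma pba_additive: "P \<in> pba A \<Longrightarrow> E \<in> A \<Longrightarrow> F \<in> A \<Longrightarrow> E \<inter> F = {} \<Longrightarrow> P (E \<union> F) = P E + P F"
  and pba_nonneg: "P \<in> pba A \<Longrightarrow> 0 \<le> P E"
  and pba_outside: "P \<in> pba A \<Longrightarrow> E \<notin> A \<Longrightarrow> P E = 0"
  and pba_UNIV: "P \<in> pba A \<Longrightarrow> P UNIV = 1"
  by (cases "E \<in> A"; auto simp: pba_def fin_additive_def)+

lemma pba_empty: "is_field A \<Longrightarrow> P \<in> pba A \<Longrightarrow> P {} = 0"
  using pba_additive[of P A "{}" "{}"] is_field_empty by auto

lemma pba_mono:
  assumes "is_field A" "P \<in> pba A" "E \<in> A" "F \<in> A" "E \<subseteq> F"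
  shows "P E \<le> P F"
proof -
  have "P F = P (E \<union> (F - E))"
    using \<open>E \<subseteq> F\<close> by (simp add: Un_absorb1)
  also have "\<dots> = P E + P (F - E)"
    using assms by (intro pba_additive) (auto intro: is_field_Diff)
  finally show ?thesis
    using pba_nonneg[OF assms(2)] by simp
qed

lemma pba_le_1: "is_field A \<Longrightarrow> P \<in> pba A \<Longrightarrow> P E \<le> 1"
  using pba_mono[OF _ _ _ is_field_UNIV, of A P E] pba_UNIV[of P A] pba_outside[of P A E]
  by (cases "E \<in> A") auto

lemma pba_in_ba: "is_field A \<Longrightarrow> P \<in> pba A \<Longrightarrow> P \<in> ba A"
proof -
  assume "is_field A" "P \<in> pba A"
  then have "\<bar>P E\<bar> \<le> 1" for E
    using pba_nonneg[of P A E] pba_le_1[of A P E] by simp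
  with \<open>P \<in> pba A\<close> show ?thesis
    unfolding ba_def pba_def by blast
qed

lemma dirac_pba: "is_field A \<Longrightarrow> (\<lambda>E. if E \<in> A then indicator E \<omega> else 0 :: real) \<in> pba A"
  unfolding pba_def fin_additive_def
  using is_field_Un is_field_UNIV by (auto simp: indicator_def)

definition simple_int :: "('w set \<Rightarrow> real) \<Rightarrow> 'w set set \<Rightarrow> ('w set \<Rightarrow> real) \<Rightarrow> real" where
  "simple_int \<mu> F c = (\<Sum>E\<in>F. c E * \<mu> E)"

text \<open>Evaluation at \<open>x\<close> is the elementary integral against the Dirac mass at \<open>x\<close>, so facts
  about \<open>simple_int\<close> cover simple functions as well.\<close>
definition simple_fun :: "'w set set \<Rightarrow> ('w set \<Rightarrow> real) \<Rightarrow> 'w \<Rightarrow> real" where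
  "simple_fun F c x = simple_int (\<lambda>E. indicator E x) F c"

lemma simple_fun_eq: "simple_fun F c = (\<lambda>x. \<Sum>E\<in>F. c E * indicator E x)"
  by (simp add: fun_eq_iff simple_fun_def simple_int_def)

lemma simple_int_uminus: "simple_int \<mu> F (\<lambda>E. - c E) = - simple_int \<mu> F c"
  by (simp add: simple_int_def sum_negf)

lemma simple_int_lincomb:
  assumes "finite F1" "finite F2"
  obtains c where "\<And>\<mu>. simple_int \<mu> (F1 \<union> F2) c = a * simple_int \<mu> F1 c1 + simple_int \<mu> F2 c2"
proof
  fix \<mu> :: "'a set \<Rightarrow> real"
  let ?ext = "\<lambda>F c E. if E \<in> F then c E else 0"
  have ext: "simple_int \<mu> (F1 \<union> F2) (?ext F c) = simple_int \<mu> F c" if "F \<subseteq> F1 \<union> F2" for F c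
  proof -
    have "simple_int \<mu> (F1 \<union> F2) (?ext F c) = (\<Sum>E\<in>F1 \<union> F2. if E \<in> F then c E * \<mu> E else 0)"
      unfolding simple_int_def by (intro sum.cong) auto
    also have "\<dots> = (\<Sum>E\<in>(F1 \<union> F2) \<inter> F. c E * \<mu> E)"
      using assms by (simp add: sum.inter_restrict)
    finally show ?thesis
      using that by (simp add: Int_absorb1 simple_int_def)
  qed
  show "simple_int \<mu> (F1 \<union> F2) (\<lambda>E. a * ?ext F1 c1 E + ?ext F2 c2 E)
      = a * simple_int \<mu> F1 c1 + simple_int \<mu> F2 c2"
  proof -
    have "simple_int \<mu> (F1 \<union> F2) (\<lambda>E. a * ?ext F1 c1 E + ?ext F2 c2 E)
        = a * simple_int \<mu> (F1 \<union> F2) (?ext F1 c1) + simple_int \<mu> (F1 \<union> F2) (?ext F2 c2)"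
      unfolding simple_int_def sum_distrib_left sum.distrib[symmetric]
      by (rule sum.cong) (simp_all add: ring_distribs)
    then show ?thesis
      using ext[of F1 c1] ext[of F2 c2] by simp
  qed
qed

text \<open>Relative to \<open>G\<close>, so that the induction can split \<open>G\<close> along each newly added set.\<close>
lemma simple_int_restrict_le:
  assumes A: "is_field A" and P: "P \<in> pba A" and "finite F" "F \<subseteq> A" "G \<in> A"
    and "\<forall>x\<in>G. simple_fun F c x \<le> d"
  shows "simple_int (\<lambda>E. P (E \<inter> G)) F c \<le> d * P G"
  using assms(3-)
proof (induction F arbitrary: d G rule: finite_induct)
  case empty
  show ?case
  proof (cases "G = {}")
    case False
    with empty have "0 \<le> d"
      by (auto simp: simple_fun_def simple_int_def)
    then show ?thesis
      using pba_nonneg[OF P] by (simp add: simple_int_def)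
  qed (simp add: simple_int_def pba_empty[OF A P])
next
  case (insert E0 F)
  define G1 G2 where "G1 = G \<inter> E0" and "G2 = G - E0"
  have G12: "G1 \<in> A" "G2 \<in> A" "G1 \<inter> G2 = {}"
    using insert.prems A unfolding G1_def G2_def by (auto intro: is_field_Int is_field_Diff)
  have split: "P (E \<inter> G) = P (E \<inter> G1) + P (E \<inter> G2)" if "E \<in> A" for E
  proof -
    have "E \<inter> G = (E \<inter> G1) \<union> (E \<inter> G2)"
      unfolding G1_def G2_def by auto
    then show ?thesis
      using G12 that A by (auto intro!: pba_additive[OF P] is_field_Int)
  qed
  have "P G = P G1 + P G2"
    using split[OF is_field_UNIV[OF A]] by simp
  have sf: "simple_fun (insert E0 F) c x = c E0 * indicator E0 x + simple_fun F c x" for x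
    unfolding simple_fun_def simple_int_def by (rule sum.insert[OF insert.hyps])
  have "simple_int (\<lambda>E. P (E \<inter> G1)) F c \<le> (d - c E0) * P G1"
    using insert.prems sf G12 by (intro insert.IH) (auto simp: G1_def)
  moreover have "simple_int (\<lambda>E. P (E \<inter> G2)) F c \<le> d * P G2"
    using insert.prems sf G12 by (intro insert.IH) (auto simp: G2_def)
  moreover have "simple_int (\<lambda>E. P (E \<inter> G)) F c
      = simple_int (\<lambda>E. P (E \<inter> G1)) F c + simple_int (\<lambda>E. P (E \<inter> G2)) F c"
    unfolding simple_int_def sum.distrib[symmetric] distrib_left[symmetric]
    using insert.prems(1) split by (intro sum.cong) auto
  moreover have "P (E0 \<inter> G) = P G1"
    by (simp add: G1_def Int_commute)
  ultimately show ?case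
    using insert.hyps \<open>P G = P G1 + P G2\<close> by (simp add: simple_int_def algebra_simps)
qed

lemma simple_int_le:
  assumes "is_field A" "P \<in> pba A" "finite F" "F \<subseteq> A" "\<forall>x. simple_fun F c x \<le> d"
  shows "simple_int P F c \<le> d"
  using simple_int_restrict_le[OF assms(1-4) is_field_UNIV[OF assms(1)], of c d] assms(5)
  by (simp add: pba_UNIV[OF assms(2)])

lemma simple_int_ge:
  assumes "is_field A" "P \<in> pba A" "finite F" "F \<subseteq> A" "\<forall>x. b \<le> simple_fun F c x"
  shows "b \<le> simple_int P F c"
  using simple_int_le[OF assms(1-4), of "\<lambda>E. - c E" "- b"] assms(5)
  by (simp add: simple_fun_def simple_int_uminus)

lemma simple_int_diff_abs_le:
  assumes "is_field A" "P \<in> pba A" "finite F1" "F1 \<subseteq> A" "finite F2" "F2 \<subseteq> A"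
    and "\<forall>x. \<bar>simple_fun F1 c1 x - simple_fun F2 c2 x\<bar> \<le> d"
  shows "\<bar>simple_int P F1 c1 - simple_int P F2 c2\<bar> \<le> d"
proof -
  obtain c where c: "\<And>\<mu>. simple_int \<mu> (F2 \<union> F1) c = - 1 * simple_int \<mu> F2 c2 + simple_int \<mu> F1 c1"
    using simple_int_lincomb[OF assms(5,3), where a="-1"] by blast
  have "\<bar>simple_fun (F2 \<union> F1) c x\<bar> \<le> d" for x
    using assms(7) by (simp add: simple_fun_def c)
  then have "\<forall>x. simple_fun (F2 \<union> F1) c x \<le> d" "\<forall>x. - d \<le> simple_fun (F2 \<union> F1) c x"
    by (meson abs_le_iff minus_le_iff)+
  then have "simple_int P (F2 \<union> F1) c \<le> d" "- d \<le> simple_int P (F2 \<union> F1) c"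
    using assms(3-6) by (auto intro!: simple_int_le[OF assms(1,2)] simple_int_ge[OF assms(1,2)])
  then show ?thesis
    by (simp add: c abs_le_iff)
qed

subsection \<open>The integral on \<open>B(\<Omega>, A)\<close>\<close>

lemma le_of_le_add_mult_epsilon:
  fixes x y K :: real
  assumes "\<And>e. e > 0 \<Longrightarrow> x \<le> y + K * e"
  shows "x \<le> y"
proof (rule field_le_epsilon)
  fix e :: real
  assume "e > 0"
  define e' where "e' = e / (\<bar>K\<bar> + 1)"
  have "e' > 0"
    using \<open>e > 0\<close> by (simp add: e'_def add_nonneg_pos)
  have "K * e' \<le> \<bar>K\<bar> * e'"
    using \<open>e' > 0\<close> by (simp add: mult_right_mono)
  also have "\<dots> \<le> (\<bar>K\<bar> + 1) * e'"
    using \<open>e' > 0\<close> by simp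
  also have "\<dots> = e"
    by (simp add: e'_def add_nonneg_pos)
  finally show "x \<le> y + e"
    using assms[OF \<open>e' > 0\<close>] by linarith
qed

lemma eq_of_abs_diff_le_mult_epsilon:
  fixes x y K :: real
  assumes "\<And>e. e > 0 \<Longrightarrow> \<bar>x - y\<bar> \<le> K * e"
  shows "x = y"
proof -
  have bound: "y - K * e \<le> x \<and> x \<le> y + K * e" if "e > 0" for e
    using assms[OF that] by (simp add: abs_diff_le_iff)
  have "x \<le> y"
    by (rule le_of_le_add_mult_epsilon[where K=K]) (use bound in blast)
  moreover have "y \<le> x"
    by (rule le_of_le_add_mult_epsilon[where K=K]) (use bound diff_le_eq in metis)
  ultimately show ?thesis
    by simp
qed

lemma Bfun_approx:
  assumes "g \<in> Bfun A" "\<eta> > 0"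
  obtains F c where "finite F" "F \<subseteq> A" "\<forall>x. \<bar>g x - simple_fun F c x\<bar> < \<eta>"
proof -
  obtain s where "s \<in> simple_fns A" "\<forall>x. \<bar>g x - s x\<bar> < \<eta>"
    using assms unfolding Bfun_def by blast
  then show thesis
    using that unfolding simple_fns_def simple_fun_eq by blast
qed

lemma simple_fun_simple_fns: "finite F \<Longrightarrow> F \<subseteq> A \<Longrightarrow> simple_fun F c \<in> simple_fns A"
  unfolding simple_fns_def simple_fun_eq by blast

lemma simple_fun_Bfun: "finite F \<Longrightarrow> F \<subseteq> A \<Longrightarrow> simple_fun F c \<in> Bfun A"
proof -
  assume "finite F" "F \<subseteq> A"
  then have "\<exists>s\<in>simple_fns A. \<forall>x. \<bar>simple_fun F c x - s x\<bar> < \<epsilon>" if "\<epsilon> > 0" for \<epsilon> :: real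
    using that by (intro bexI[of _ "simple_fun F c"] simple_fun_simple_fns) auto
  then show ?thesis
    unfolding Bfun_def by blast
qed

lemma simple_fns_mono: "M \<subseteq> A \<Longrightarrow> simple_fns M \<subseteq> simple_fns A"
  unfolding simple_fns_def by blast

lemma Bfun_mono: "M \<subseteq> A \<Longrightarrow> Bfun M \<subseteq> Bfun A"
  unfolding Bfun_def using simple_fns_mono by blast

lemma simple_fun_lincomb_approx:
  assumes "finite F1" "finite F2"
    and "\<forall>x. \<bar>g x - simple_fun F1 c1 x\<bar> \<le> d1" "\<forall>x. \<bar>h x - simple_fun F2 c2 x\<bar> \<le> d2"
  obtains c where "\<forall>x. \<bar>a * g x + h x - simple_fun (F1 \<union> F2) c x\<bar> \<le> \<bar>a\<bar> * d1 + d2"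
    and "\<And>\<mu>. simple_int \<mu> (F1 \<union> F2) c = a * simple_int \<mu> F1 c1 + simple_int \<mu> F2 c2"
proof -
  obtain c where c: "\<And>\<mu>. simple_int \<mu> (F1 \<union> F2) c = a * simple_int \<mu> F1 c1 + simple_int \<mu> F2 c2"
    using simple_int_lincomb[OF assms(1,2)] by blast
  have bound: "\<bar>a * g x + h x - simple_fun (F1 \<union> F2) c x\<bar> \<le> \<bar>a\<bar> * d1 + d2" for x
  proof -
    have "\<bar>a * g x + h x - simple_fun (F1 \<union> F2) c x\<bar>
        = \<bar>a * (g x - simple_fun F1 c1 x) + (h x - simple_fun F2 c2 x)\<bar>"
      by (simp add: simple_fun_def c algebra_simps)
    also have "\<dots> \<le> \<bar>a\<bar> * \<bar>g x - simple_fun F1 c1 x\<bar> + \<bar>h x - simple_fun F2 c2 x\<bar>"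
      by (metis abs_mult abs_triangle_ineq)
    also have "\<dots> \<le> \<bar>a\<bar> * d1 + d2"
      using assms(3,4) by (intro add_mono mult_left_mono) auto
    finally show ?thesis .
  qed
  show thesis
    by (rule that[OF _ c]) (use bound in simp)
qed

lemma Bfun_lincomb:
  assumes g: "g \<in> Bfun A" and h: "h \<in> Bfun A"
  shows "(\<lambda>x. a * g x + h x) \<in> Bfun A"
  unfolding Bfun_def
proof (intro CollectI allI impI)
  fix \<epsilon> :: real
  assume "\<epsilon> > 0"
  define \<eta> where "\<eta> = \<epsilon> / (\<bar>a\<bar> + 2)"
  have "\<eta> > 0" "(\<bar>a\<bar> + 1) * \<eta> < \<epsilon>"
    using \<open>\<epsilon> > 0\<close> by (auto simp: \<eta>_def field_simps add_nonneg_pos)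
  obtain F1 c1 where "finite F1" "F1 \<subseteq> A" and c1: "\<forall>x. \<bar>g x - simple_fun F1 c1 x\<bar> < \<eta>"
    using Bfun_approx[OF g \<open>\<eta> > 0\<close>] .
  obtain F2 c2 where "finite F2" "F2 \<subseteq> A" and c2: "\<forall>x. \<bar>h x - simple_fun F2 c2 x\<bar> < \<eta>"
    using Bfun_approx[OF h \<open>\<eta> > 0\<close>] .
  obtain c where "\<forall>x. \<bar>a * g x + h x - simple_fun (F1 \<union> F2) c x\<bar> \<le> \<bar>a\<bar> * \<eta> + \<eta>"
    using simple_fun_lincomb_approx[OF \<open>finite F1\<close> \<open>finite F2\<close>, of g c1 \<eta> h c2 \<eta> a] c1 c2
    by (meson less_imp_le)
  moreover have "\<bar>a\<bar> * \<eta> + \<eta> < \<epsilon>"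
    using \<open>(\<bar>a\<bar> + 1) * \<eta> < \<epsilon>\<close> by (simp add: distrib_right)
  moreover have "simple_fun (F1 \<union> F2) c \<in> simple_fns A"
    using \<open>finite F1\<close> \<open>finite F2\<close> \<open>F1 \<subseteq> A\<close> \<open>F2 \<subseteq> A\<close> by (simp add: simple_fun_simple_fns)
  ultimately show "\<exists>s\<in>simple_fns A. \<forall>x. \<bar>a * g x + h x - s x\<bar> < \<epsilon>"
    by (meson order.strict_trans1)
qed

lemma fa_integral_eqI:
  assumes "g \<in> Bfun A"
    and approx: "\<And>F c d. finite F \<Longrightarrow> F \<subseteq> A \<Longrightarrow> \<forall>x. \<bar>g x - simple_fun F c x\<bar> \<le> d \<Longrightarrow>
      \<bar>simple_int P F c - r\<bar> \<le> d"
  shows "fa_integral A P g = r"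
  unfolding fa_integral_def
proof (rule the_equality)
  show "\<forall>\<epsilon>>0. \<exists>\<delta>>0. \<forall>F c. finite F \<and> F \<subseteq> A \<and> (\<forall>x. \<bar>g x - (\<Sum>E\<in>F. c E * indicator E x)\<bar> < \<delta>) \<longrightarrow>
      \<bar>(\<Sum>E\<in>F. c E * P E) - r\<bar> < \<epsilon>"
  proof (intro allI impI)
    fix \<epsilon> :: real
    assume "\<epsilon> > 0"
    show "\<exists>\<delta>>0. \<forall>F c. finite F \<and> F \<subseteq> A \<and> (\<forall>x. \<bar>g x - (\<Sum>E\<in>F. c E * indicator E x)\<bar> < \<delta>) \<longrightarrow>
      \<bar>(\<Sum>E\<in>F. c E * P E) - r\<bar> < \<epsilon>"
    proof (intro exI[of _ "\<epsilon> / 2"] conjI allI impI)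
      fix F c
      assume "finite F \<and> F \<subseteq> A \<and> (\<forall>x. \<bar>g x - (\<Sum>E\<in>F. c E * indicator E x)\<bar> < \<epsilon> / 2)"
      then have "\<bar>simple_int P F c - r\<bar> \<le> \<epsilon> / 2"
        by (intro approx) (auto simp: simple_fun_eq less_imp_le)
      with \<open>\<epsilon> > 0\<close> show "\<bar>(\<Sum>E\<in>F. c E * P E) - r\<bar> < \<epsilon>"
        by (simp add: simple_int_def)
    qed (use \<open>\<epsilon> > 0\<close> in simp)
  qed
next
  fix r'
  assume r': "\<forall>\<epsilon>>0. \<exists>\<delta>>0. \<forall>F c. finite F \<and> F \<subseteq> A \<and> (\<forall>x. \<bar>g x - (\<Sum>E\<in>F. c E * indicator E x)\<bar> < \<delta>) \<longrightarrow>
      \<bar>(\<Sum>E\<in>F. c E * P E) - r'\<bar> < \<epsilon>"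
  show "r' = r"
  proof (rule eq_of_abs_diff_le_mult_epsilon[where K=2])
    fix \<epsilon> :: real
    assume "\<epsilon> > 0"
    then obtain \<delta> where "\<delta> > 0" and \<delta>: "\<forall>F c. finite F \<and> F \<subseteq> A \<and>
        (\<forall>x. \<bar>g x - simple_fun F c x\<bar> < \<delta>) \<longrightarrow> \<bar>simple_int P F c - r'\<bar> < \<epsilon>"
      using r' by (auto simp: simple_fun_eq simple_int_def)
    obtain F c where "finite F" "F \<subseteq> A" "\<forall>x. \<bar>g x - simple_fun F c x\<bar> < min \<delta> \<epsilon>"
      using Bfun_approx[OF assms(1), of "min \<delta> \<epsilon>"] \<open>\<delta> > 0\<close> \<open>\<epsilon> > 0\<close> by auto
    then have "\<bar>simple_int P F c - r'\<bar> < \<epsilon>" "\<bar>simple_int P F c - r\<bar> \<le> \<epsilon>"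
      using \<delta> approx[of F c \<epsilon>] by (auto simp: less_imp_le)
    then show "\<bar>r' - r\<bar> \<le> 2 * \<epsilon>"
      by linarith
  qed
qed

text \<open>The integral is the common limit of the elementary integrals of uniform approximants,
  realised here as the supremum of their lower estimates.\<close>
lemma fa_integral_approx:
  assumes A: "is_field A" and P: "P \<in> pba A" and g: "g \<in> Bfun A"
    and "finite F" "F \<subseteq> A" "\<forall>x. \<bar>g x - simple_fun F c x\<bar> \<le> d"
  shows "\<bar>simple_int P F c - fa_integral A P g\<bar> \<le> d"
proof -
  define L where "L = {simple_int P F c - d | F c d. finite F \<and> F \<subseteq> A \<and>
    (\<forall>x. \<bar>g x - simple_fun F c x\<bar> \<le> d)}"
  have upper: "l \<le> simple_int P F2 c2 + d2"
    if "l \<in> L" "finite F2" "F2 \<subseteq> A" "\<forall>x. \<bar>g x - simple_fun F2 c2 x\<bar> \<le> d2" for l F2 c2 d2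
  proof -
    obtain F1 c1 d1 where l: "l = simple_int P F1 c1 - d1" "finite F1" "F1 \<subseteq> A"
      and d1: "\<forall>x. \<bar>g x - simple_fun F1 c1 x\<bar> \<le> d1"
      using \<open>l \<in> L\<close> unfolding L_def by blast
    have "\<forall>x. \<bar>simple_fun F1 c1 x - simple_fun F2 c2 x\<bar> \<le> d1 + d2"
    proof
      fix x
      have "\<bar>g x - simple_fun F1 c1 x\<bar> \<le> d1" "\<bar>g x - simple_fun F2 c2 x\<bar> \<le> d2"
        using d1 that(4) by blast+
      then show "\<bar>simple_fun F1 c1 x - simple_fun F2 c2 x\<bar> \<le> d1 + d2"
        by arith
    qed
    then have "\<bar>simple_int P F1 c1 - simple_int P F2 c2\<bar> \<le> d1 + d2"
      by (rule simple_int_diff_abs_le[OF A P l(2,3) that(2,3)])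
    then show ?thesis
      using l(1) by linarith
  qed
  obtain F0 c0 where F0: "finite F0" "F0 \<subseteq> A" "\<forall>x. \<bar>g x - simple_fun F0 c0 x\<bar> < 1"
    using Bfun_approx[OF g, of 1] by auto
  then have F0': "\<forall>x. \<bar>g x - simple_fun F0 c0 x\<bar> \<le> 1"
    by (simp add: less_imp_le)
  have "L \<noteq> {}"
    unfolding L_def using F0(1,2) F0' by blast
  have "bdd_above L"
    using upper[OF _ F0(1,2) F0'] by (rule bdd_aboveI)
  have approx: "\<bar>simple_int P F' c' - Sup L\<bar> \<le> d'"
    if "finite F'" "F' \<subseteq> A" "\<forall>x. \<bar>g x - simple_fun F' c' x\<bar> \<le> d'" for F' c' d'
  proof -
    have "simple_int P F' c' - d' \<in> L"
      unfolding L_def using that by blast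
    then have "simple_int P F' c' - d' \<le> Sup L"
      using \<open>bdd_above L\<close> by (rule cSup_upper)
    moreover have "Sup L \<le> simple_int P F' c' + d'"
      using \<open>L \<noteq> {}\<close> upper[OF _ that] by (rule cSup_least)
    ultimately show ?thesis
      by linarith
  qed
  have "fa_integral A P g = Sup L"
    by (rule fa_integral_eqI[OF g approx])
  then show ?thesis
    using approx[OF assms(4-6)] by simp
qed

lemma fa_integral_simple_fun:
  assumes "is_field A" "P \<in> pba A" "finite F" "F \<subseteq> A"
  shows "fa_integral A P (simple_fun F c) = simple_int P F c"
  using fa_integral_approx[OF assms(1,2) simple_fun_Bfun[OF assms(3,4), of c] assms(3,4), where c=c and d=0]
  by simp

lemma Bfun_zero: "(\<lambda>x. 0) \<in> Bfun A"
  and fa_integral_zero: "is_field A \<Longrightarrow> P \<in> pba A \<Longrightarrow> fa_integral A P (\<lambda>x. 0) = 0"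
  using simple_fun_Bfun[of "{}" A "\<lambda>_. 0"] fa_integral_simple_fun[of A P "{}" "\<lambda>_. 0"]
  by (simp_all add: simple_fun_eq simple_int_def)

lemma Bfun_indicator: "E \<in> A \<Longrightarrow> (indicator E :: 'w \<Rightarrow> real) \<in> Bfun A"
  and fa_integral_indicator: "is_field A \<Longrightarrow> P \<in> pba A \<Longrightarrow> E \<in> A \<Longrightarrow> fa_integral A P (indicator E) = P E"
  using simple_fun_Bfun[of "{E}" A "\<lambda>_. 1"] fa_integral_simple_fun[of A P "{E}" "\<lambda>_. 1"]
  by (simp_all add: simple_fun_eq simple_int_def)

lemma fa_integral_lincomb:
  assumes A: "is_field A" and P: "P \<in> pba A" and g: "g \<in> Bfun A" and h: "h \<in> Bfun A"
  shows "fa_integral A P (\<lambda>x. a * g x + h x) = a * fa_integral A P g + fa_integral A P h"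
proof (rule eq_of_abs_diff_le_mult_epsilon[where K="2 * \<bar>a\<bar> + 2"])
  fix \<eta> :: real
  assume "\<eta> > 0"
  obtain F1 c1 F2 c2 where F1: "finite F1" "F1 \<subseteq> A" "\<forall>x. \<bar>g x - simple_fun F1 c1 x\<bar> \<le> \<eta>"
    and F2: "finite F2" "F2 \<subseteq> A" "\<forall>x. \<bar>h x - simple_fun F2 c2 x\<bar> \<le> \<eta>"
    using Bfun_approx[OF g \<open>\<eta> > 0\<close>] Bfun_approx[OF h \<open>\<eta> > 0\<close>] by (metis less_imp_le)
  obtain c where c: "\<forall>x. \<bar>a * g x + h x - simple_fun (F1 \<union> F2) c x\<bar> \<le> \<bar>a\<bar> * \<eta> + \<eta>"
    and si: "simple_int P (F1 \<union> F2) c = a * simple_int P F1 c1 + simple_int P F2 c2"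
    using simple_fun_lincomb_approx[OF F1(1) F2(1) F1(3) F2(3)] by metis
  have "\<bar>simple_int P (F1 \<union> F2) c - fa_integral A P (\<lambda>x. a * g x + h x)\<bar> \<le> \<bar>a\<bar> * \<eta> + \<eta>"
    using fa_integral_approx[OF A P Bfun_lincomb[OF g h] _ _ c] F1 F2 by simp
  moreover have "\<bar>a * simple_int P F1 c1 - a * fa_integral A P g\<bar> \<le> \<bar>a\<bar> * \<eta>"
    using mult_left_mono[OF fa_integral_approx[OF A P g F1] abs_ge_zero[of a]]
    by (simp add: abs_mult[symmetric] right_diff_distrib[symmetric])
  moreover have "\<bar>simple_int P F2 c2 - fa_integral A P h\<bar> \<le> \<eta>"
    using fa_integral_approx[OF A P h F2] .
  ultimately show "\<bar>fa_integral A P (\<lambda>x. a * g x + h x) - (a * fa_integral A P g + fa_integral A P h)\<bar>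
      \<le> (2 * \<bar>a\<bar> + 2) * \<eta>"
    unfolding si by (simp add: algebra_simps)
qed

lemma Bfun_scale: "g \<in> Bfun A \<Longrightarrow> (\<lambda>x. a * g x) \<in> Bfun A"
  using Bfun_lincomb[OF _ Bfun_zero, of g A a] by simp

lemma fa_integral_scale:
  "is_field A \<Longrightarrow> P \<in> pba A \<Longrightarrow> g \<in> Bfun A \<Longrightarrow> fa_integral A P (\<lambda>x. a * g x) = a * fa_integral A P g"
  using fa_integral_lincomb[OF _ _ _ Bfun_zero, of A P g a] fa_integral_zero by simp

lemma Bfun_diff: "g \<in> Bfun A \<Longrightarrow> h \<in> Bfun A \<Longrightarrow> (\<lambda>x. g x - h x) \<in> Bfun A"
  using Bfun_lincomb[of h A g "- 1"] by simp

lemma fa_integral_diff: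
  "is_field A \<Longrightarrow> P \<in> pba A \<Longrightarrow> g \<in> Bfun A \<Longrightarrow> h \<in> Bfun A \<Longrightarrow>
    fa_integral A P (\<lambda>x. g x - h x) = fa_integral A P g - fa_integral A P h"
  using fa_integral_lincomb[of A P h g "- 1"] by simp

lemma Bfun_sum: "finite I \<Longrightarrow> (\<And>i. i \<in> I \<Longrightarrow> f i \<in> Bfun A) \<Longrightarrow> (\<lambda>x. \<Sum>i\<in>I. f i x) \<in> Bfun A"
proof (induction I rule: finite_induct)
  case (insert i I)
  then have "(\<lambda>x. 1 * f i x + (\<Sum>i\<in>I. f i x)) \<in> Bfun A"
    by (intro Bfun_lincomb) auto
  with insert.hyps show ?case
    by simp
qed (simp add: Bfun_zero)

lemma fa_integral_sum:
  assumes "is_field A" "P \<in> pba A"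
  shows "finite I \<Longrightarrow> (\<And>i. i \<in> I \<Longrightarrow> f i \<in> Bfun A) \<Longrightarrow>
    fa_integral A P (\<lambda>x. \<Sum>i\<in>I. f i x) = (\<Sum>i\<in>I. fa_integral A P (f i))"
proof (induction I rule: finite_induct)
  case (insert i I)
  then have "fa_integral A P (\<lambda>x. 1 * f i x + (\<Sum>i\<in>I. f i x))
      = 1 * fa_integral A P (f i) + fa_integral A P (\<lambda>x. \<Sum>i\<in>I. f i x)"
    by (intro fa_integral_lincomb[OF assms] Bfun_sum) auto
  with insert show ?case
    by simp
qed (simp add: fa_integral_zero[OF assms])

lemma fa_integral_ge:
  assumes A: "is_field A" and P: "P \<in> pba A" and g: "g \<in> Bfun A" and "\<forall>x. b \<le> g x"
  shows "b \<le> fa_integral A P g"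
proof (rule le_of_le_add_mult_epsilon[where K=2])
  fix \<eta> :: real
  assume "\<eta> > 0"
  then obtain F c where F: "finite F" "F \<subseteq> A" and c: "\<forall>x. \<bar>g x - simple_fun F c x\<bar> \<le> \<eta>"
    using Bfun_approx[OF g] by (metis less_imp_le)
  have "b - \<eta> \<le> simple_fun F c x" for x
  proof -
    have "\<bar>g x - simple_fun F c x\<bar> \<le> \<eta>" "b \<le> g x"
      using c assms(4) by blast+
    then show ?thesis
      by arith
  qed
  then have "b - \<eta> \<le> simple_int P F c"
    by (intro simple_int_ge[OF A P F] allI)
  with fa_integral_approx[OF A P g F c] show "b \<le> fa_integral A P g + 2 * \<eta>"
    by linarith
qed

subsection \<open>Setwise convergence of finitely additive probabilities\<close>

lemma pba_if_setwise_approx: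
  assumes A: "is_field A"
    and approx: "\<And>Es \<eta>. finite Es \<Longrightarrow> \<eta> > 0 \<Longrightarrow> \<exists>Q\<in>pba A. \<forall>E\<in>Es. \<bar>Q E - P E\<bar> < \<eta>"
  shows "P \<in> pba A"
  unfolding pba_def fin_additive_def
proof (intro CollectI conjI allI impI ballI)
  fix E
  assume "E \<notin> A"
  show "P E = 0"
  proof (rule eq_of_abs_diff_le_mult_epsilon[where K=1])
    fix \<eta> :: real
    assume "\<eta> > 0"
    then obtain Q where "Q \<in> pba A" "\<bar>Q E - P E\<bar> < \<eta>"
      using approx[of "{E}"] by auto
    with \<open>E \<notin> A\<close> show "\<bar>P E - 0\<bar> \<le> 1 * \<eta>"
      by (simp add: pba_outside)
  qed
next
  fix E
  show "0 \<le> P E"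
  proof (rule le_of_le_add_mult_epsilon[where K=1])
    fix \<eta> :: real
    assume "\<eta> > 0"
    then obtain Q where "Q \<in> pba A" "\<bar>Q E - P E\<bar> < \<eta>"
      using approx[of "{E}"] by auto
    then show "0 \<le> P E + 1 * \<eta>"
      using pba_nonneg[of Q A E] by linarith
  qed
next
  fix E F
  assume EF: "E \<in> A" "F \<in> A" "E \<inter> F = {}"
  show "P (E \<union> F) = P E + P F"
  proof (rule eq_of_abs_diff_le_mult_epsilon[where K=3])
    fix \<eta> :: real
    assume "\<eta> > 0"
    then obtain Q where "Q \<in> pba A" and Q: "\<forall>G\<in>{E, F, E \<union> F}. \<bar>Q G - P G\<bar> < \<eta>"
      using approx[of "{E, F, E \<union> F}"] by auto
    then have "Q (E \<union> F) = Q E + Q F"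
      using pba_additive EF by blast
    with Q show "\<bar>P (E \<union> F) - (P E + P F)\<bar> \<le> 3 * \<eta>"
      by auto
  qed
next
  show "P UNIV = 1"
  proof (rule eq_of_abs_diff_le_mult_epsilon[where K=1])
    fix \<eta> :: real
    assume "\<eta> > 0"
    then obtain Q where "Q \<in> pba A" "\<bar>Q UNIV - P UNIV\<bar> < \<eta>"
      using approx[of "{UNIV}"] by auto
    then show "\<bar>P UNIV - 1\<bar> \<le> 1 * \<eta>"
      by (simp add: pba_UNIV abs_minus_commute)
  qed
qed

lemma compact_unit_cube: "compact (Pi\<^sub>E UNIV (\<lambda>_. {0..1::real}))"
proof -
  have "compactin (product_topology (\<lambda>_. euclidean) UNIV) (Pi\<^sub>E UNIV (\<lambda>_. {0..1::real}))"
    by (subst compactin_PiE) auto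
  then show ?thesis
    by (simp add: euclidean_product_topology)
qed

text \<open>Tychonoff: \<open>pba A\<close> is compact for setwise convergence, so every net in it has a
  cluster point.\<close>
lemma pba_cluster_point:
  fixes Q :: "'j \<Rightarrow> 'w set \<Rightarrow> real"
  assumes A: "is_field A" and "F \<noteq> bot" and Q: "eventually (\<lambda>j. Q j \<in> pba A) F"
  obtains P where "P \<in> pba A"
    and "\<And>Es \<eta> R. finite Es \<Longrightarrow> \<eta> > 0 \<Longrightarrow> eventually R F \<Longrightarrow>
      \<exists>j. R j \<and> (\<forall>E\<in>Es. \<bar>Q j E - P E\<bar> < \<eta>)"
proof -
  define K where "K = (Pi\<^sub>E UNIV (\<lambda>_. {0..1::real}) :: ('w set \<Rightarrow> real) set)"
  have "filtermap Q F \<noteq> bot"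
    using \<open>F \<noteq> bot\<close> by (simp add: filtermap_bot_iff)
  moreover have "eventually (\<lambda>P. P \<in> K) (filtermap Q F)"
    unfolding eventually_filtermap using Q
    by (rule eventually_mono) (auto simp: K_def pba_nonneg pba_le_1[OF A])
  ultimately obtain P where "inf (nhds P) (filtermap Q F) \<noteq> bot"
    using compact_unit_cube unfolding compact_filter K_def by blast
  have approx: "\<exists>j. R j \<and> (\<forall>E\<in>Es. \<bar>Q j E - P E\<bar> < \<eta>)"
    if "finite Es" "\<eta> > 0" "eventually R F" for Es \<eta> R
  proof (rule ccontr)
    assume far: "\<nexists>j. R j \<and> (\<forall>E\<in>Es. \<bar>Q j E - P E\<bar> < \<eta>)"
    define U where "U = {Q'. \<forall>E\<in>Es. Q' E \<in> ball (P E) \<eta>}"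
    have "open U"
      unfolding U_def using product_topology_basis'[OF \<open>finite Es\<close>, of "\<lambda>E. ball (P E) \<eta>" id] by simp
    moreover have "P \<in> U"
      unfolding U_def using \<open>\<eta> > 0\<close> by simp
    ultimately have "eventually (\<lambda>Q'. Q' \<in> U) (nhds P)"
      by (rule eventually_nhds_in_open)
    moreover have "eventually (\<lambda>Q'. Q' \<notin> U) (filtermap Q F)"
      unfolding eventually_filtermap using \<open>eventually R F\<close>
      by (rule eventually_mono) (use far in \<open>auto simp: U_def dist_real_def abs_minus_commute\<close>)
    ultimately have "eventually (\<lambda>_. False) (inf (nhds P) (filtermap Q F))"
      unfolding eventually_inf by blast
    with \<open>inf (nhds P) (filtermap Q F) \<noteq> bot\<close> show False
      by (simp add: eventually_False)
  qed
  have "P \<in> pba A"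
    using approx[OF _ _ Q] by (intro pba_if_setwise_approx[OF A]) blast
  with approx show thesis
    using that by blast
qed

lemma fa_integral_setwise_continuous:
  assumes A: "is_field A" and g: "g \<in> Bfun A" and "\<epsilon> > 0"
  obtains Es \<delta> where "finite Es" "\<delta> > 0"
    "\<And>P Q. P \<in> pba A \<Longrightarrow> Q \<in> pba A \<Longrightarrow> \<forall>E\<in>Es. \<bar>P E - Q E\<bar> < \<delta> \<Longrightarrow>
      \<bar>fa_integral A P g - fa_integral A Q g\<bar> < \<epsilon>"
proof -
  define \<eta> where "\<eta> = \<epsilon> / 4"
  have "\<eta> > 0"
    using \<open>\<epsilon> > 0\<close> by (simp add: \<eta>_def)
  then obtain Es c where Es: "finite Es" "Es \<subseteq> A" and c: "\<forall>x. \<bar>g x - simple_fun Es c x\<bar> \<le> \<eta>"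
    using Bfun_approx[OF g] by (metis less_imp_le)
  define B where "B = 1 + (\<Sum>E\<in>Es. \<bar>c E\<bar>)"
  have "B > 0"
    by (simp add: B_def add_pos_nonneg sum_nonneg)
  show thesis
  proof (rule that[OF Es(1) divide_pos_pos[OF \<open>\<eta> > 0\<close> \<open>B > 0\<close>]])
    fix P Q
    assume P: "P \<in> pba A" and Q: "Q \<in> pba A" and close: "\<forall>E\<in>Es. \<bar>P E - Q E\<bar> < \<eta> / B"
    have "\<bar>simple_int P Es c - simple_int Q Es c\<bar> = \<bar>\<Sum>E\<in>Es. c E * (P E - Q E)\<bar>"
      by (simp add: simple_int_def sum_subtractf right_diff_distrib)
    also have "\<dots> \<le> (\<Sum>E\<in>Es. \<bar>c E\<bar> * (\<eta> / B))"
    proof (intro order.trans[OF sum_abs] sum_mono)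
      fix E
      assume "E \<in> Es"
      then have "\<bar>P E - Q E\<bar> \<le> \<eta> / B"
        using close by (simp add: less_imp_le)
      then show "\<bar>c E * (P E - Q E)\<bar> \<le> \<bar>c E\<bar> * (\<eta> / B)"
        unfolding abs_mult by (rule mult_left_mono) simp
    qed
    also have "\<dots> = (\<Sum>E\<in>Es. \<bar>c E\<bar>) * (\<eta> / B)"
      by (rule sum_distrib_right[symmetric])
    also have "\<dots> \<le> B * (\<eta> / B)"
      using \<open>\<eta> > 0\<close> \<open>B > 0\<close> unfolding B_def by (intro mult_right_mono) auto
    also have "\<dots> = \<eta>"
      using \<open>B > 0\<close> by simp
    finally have "\<bar>simple_int P Es c - simple_int Q Es c\<bar> \<le> \<eta>" .
    moreover have "\<bar>simple_int P Es c - fa_integral A P g\<bar> \<le> \<eta>" "\<bar>simple_int Q Es c - fa_integral A Q g\<bar> \<le> \<eta>"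
      using fa_integral_approx[OF A _ g Es c] P Q by auto
    ultimately show "\<bar>fa_integral A P g - fa_integral A Q g\<bar> < \<epsilon>"
      using \<open>\<epsilon> > 0\<close> unfolding \<eta>_def by linarith
  qed
qed

subsection \<open>Type spaces\<close>

definition is_prior :: "'w set set \<Rightarrow> ('i \<Rightarrow> 'w \<Rightarrow> 'w set \<Rightarrow> real) \<Rightarrow> 'i \<Rightarrow> ('w set \<Rightarrow> real) \<Rightarrow> bool" where
  "is_prior A t k \<nu> \<longleftrightarrow> (\<forall>F\<in>A. \<nu> F = fa_integral A \<nu> (\<lambda>\<omega>. t k \<omega> F))"

definition surprise :: "('i \<Rightarrow> 'w \<Rightarrow> 'w set \<Rightarrow> real) \<Rightarrow> 'i \<Rightarrow> 'w set \<Rightarrow> 'w \<Rightarrow> real" where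
  "surprise t k F = (\<lambda>x. indicator F x - t k x F)"

lemma Inf_supersets_eq_1:
  assumes "UNIV \<in> A" "\<And>E. E \<in> A \<Longrightarrow> S \<subseteq> E \<Longrightarrow> \<nu> E = (1::real)"
  shows "Inf {\<nu> E | E. E \<in> A \<and> S \<subseteq> E} = 1"
proof -
  have "{\<nu> E | E. E \<in> A \<and> S \<subseteq> E} = {1}"
    using assms by (auto intro!: exI[of _ UNIV])
  then show ?thesis
    by simp
qed

context
  fixes N :: "'i set" and A :: "'w set set" and M :: "'i \<Rightarrow> 'w set set"
    and t :: "'i \<Rightarrow> 'w \<Rightarrow> 'w set \<Rightarrow> real"
  assumes ts: "type_space N A M t"
begin

lemma type_space_field: "is_field A"
  and type_space_belief_pba: "i \<in> N \<Longrightarrow> t i \<omega> \<in> pba A"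
  and type_space_info_field: "i \<in> N \<Longrightarrow> is_field (M i)"
  and type_space_info_subset: "i \<in> N \<Longrightarrow> M i \<subseteq> A"
  and type_space_belief_measurable: "i \<in> N \<Longrightarrow> E \<in> A \<Longrightarrow> (\<lambda>\<omega>. t i \<omega> E) \<in> Bfun (M i)"
  and type_space_belief_certain: "i \<in> N \<Longrightarrow> E \<in> M i \<Longrightarrow> \<omega> \<in> E \<Longrightarrow> t i \<omega> E = 1"
  using ts by (simp_all add: type_space_def)

lemma type_space_belief_Bfun: "i \<in> N \<Longrightarrow> E \<in> A \<Longrightarrow> (\<lambda>\<omega>. t i \<omega> E) \<in> Bfun A"
  using type_space_belief_measurable Bfun_mono[OF type_space_info_subset] by blast

lemma belief_eq_indicator:
  assumes i: "i \<in> N" and E: "E \<in> M i"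
  shows "t i \<omega> E = indicator E \<omega>"
proof (cases "\<omega> \<in> E")
  case False
  have "- E \<in> M i"
    by (rule is_field_Compl[OF type_space_info_field[OF i] E])
  have "t i \<omega> (E \<union> - E) = t i \<omega> E + t i \<omega> (- E)"
    using E \<open>- E \<in> M i\<close> type_space_info_subset[OF i] by (intro pba_additive[OF type_space_belief_pba[OF i]]) auto
  moreover have "t i \<omega> (- E) = 1"
    using type_space_belief_certain[OF i \<open>- E \<in> M i\<close>] False by simp
  ultimately show ?thesis
    using pba_UNIV[OF type_space_belief_pba[OF i]] False by simp
qed (simp add: type_space_belief_certain[OF i E])

lemma fa_integral_belief_info_measurable:
  assumes i: "i \<in> N" and \<phi>: "\<phi> \<in> Bfun (M i)"
  shows "fa_integral A (t i \<omega>) \<phi> = \<phi> \<omega>"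
proof (rule eq_of_abs_diff_le_mult_epsilon[where K=2])
  fix \<eta> :: real
  assume "\<eta> > 0"
  then obtain F c where F: "finite F" "F \<subseteq> M i" and c: "\<forall>x. \<bar>\<phi> x - simple_fun F c x\<bar> < \<eta>"
    using Bfun_approx[OF \<phi>] by blast
  have "simple_int (t i \<omega>) F c = simple_fun F c \<omega>"
    unfolding simple_fun_def simple_int_def using F(2) belief_eq_indicator[OF i] by (intro sum.cong) auto
  moreover have "\<bar>simple_int (t i \<omega>) F c - fa_integral A (t i \<omega>) \<phi>\<bar> \<le> \<eta>"
    using fa_integral_approx[OF type_space_field type_space_belief_pba[OF i] _ F(1)] F(2) c \<phi>
      type_space_info_subset[OF i] Bfun_mono[OF type_space_info_subset[OF i]] by (auto simp: less_imp_le)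
  moreover have "\<bar>\<phi> \<omega> - simple_fun F c \<omega>\<bar> < \<eta>"
    using c by blast
  ultimately show "\<bar>fa_integral A (t i \<omega>) \<phi> - \<phi> \<omega>\<bar> \<le> 2 * \<eta>"
    by linarith
qed

lemma cc_component_UNIV: "I \<subseteq> N \<Longrightarrow> cc_component A t I UNIV"
  unfolding cc_component_def using is_field_UNIV[OF type_space_field] pba_UNIV[OF type_space_belief_pba] by blast

text \<open>A set commonly certain at \<open>\<omega>\<close> contains \<open>\<omega>\<close>, and \<open>UNIV\<close> is a common certainty component.\<close>
lemma semi_bet_iff:
  "semi_bet N A t I f \<longleftrightarrow> finite I \<and> I \<subseteq> N \<and> (\<forall>i\<in>I. f i \<in> Bfun A) \<and>
     (\<forall>\<omega>. \<forall>i\<in>I. 0 \<le> fa_integral A (t i \<omega>) (f i))"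
proof -
  let ?acc = "{\<omega>'. \<forall>i\<in>I. 0 \<le> fa_integral A (t i \<omega>') (f i)}"
  have "(\<forall>\<omega>. commonly_certain A t I ?acc \<omega>) \<longleftrightarrow> ?acc = UNIV" if "I \<subseteq> N"
    using cc_component_UNIV[OF that] unfolding commonly_certain_def by blast
  then show ?thesis
    unfolding semi_bet_def by blast
qed

lemma semi_bet_extend:
  assumes f: "semi_bet N A t I f" and J: "finite J" "J \<subseteq> N" "I \<subseteq> J"
  shows "semi_bet N A t J (\<lambda>i x. if i \<in> I then f i x else 0)"
    and "(\<lambda>x. \<Sum>i\<in>J. if i \<in> I then f i x else 0) = (\<lambda>x. \<Sum>i\<in>I. f i x)"
proof -
  have "(\<lambda>x. if i \<in> I then f i x else 0) \<in> Bfun A \<and>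
      (\<forall>\<omega>. 0 \<le> fa_integral A (t i \<omega>) (\<lambda>x. if i \<in> I then f i x else 0))" if "i \<in> J" for i
    using f J that Bfun_zero fa_integral_zero[OF type_space_field type_space_belief_pba]
    unfolding semi_bet_iff by (cases "i \<in> I") auto
  with J show "semi_bet N A t J (\<lambda>i x. if i \<in> I then f i x else 0)"
    unfolding semi_bet_iff by blast
  show "(\<lambda>x. \<Sum>i\<in>J. if i \<in> I then f i x else 0) = (\<lambda>x. \<Sum>i\<in>I. f i x)"
  proof
    fix x
    have "(\<Sum>i\<in>J. if i \<in> I then f i x else 0) = (\<Sum>i\<in>J \<inter> I. f i x)"
      using J(1) by (rule sum.inter_restrict[symmetric])
    with J(3) show "(\<Sum>i\<in>J. if i \<in> I then f i x else 0) = (\<Sum>i\<in>I. f i x)"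
      by (simp add: Int_absorb1)
  qed
qed

lemma semi_bet_single_bettor:
  assumes I: "finite I" "I \<subseteq> N" "k \<in> I" and g: "g \<in> Bfun A"
    and acc: "\<forall>\<omega>. 0 \<le> fa_integral A (t k \<omega>) g"
  shows "semi_bet N A t I (\<lambda>i x. if i = k then g x else 0)"
    and "(\<lambda>x. \<Sum>i\<in>I. if i = k then g x else 0) = g"
proof -
  have "(\<lambda>x. if i = k then g x else 0) \<in> Bfun A \<and>
      (\<forall>\<omega>. 0 \<le> fa_integral A (t i \<omega>) (\<lambda>x. if i = k then g x else 0))" if "i \<in> I" for i
    using g acc that I(2) Bfun_zero fa_integral_zero[OF type_space_field type_space_belief_pba]
    by (cases "i = k") auto
  with I(1,2) show "semi_bet N A t I (\<lambda>i x. if i = k then g x else 0)"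
    unfolding semi_bet_iff by blast
  show "(\<lambda>x. \<Sum>i\<in>I. if i = k then g x else 0) = g"
    using I(1,3) by simp
qed

lemma belief_in_Pi_set:
  assumes j: "j \<in> N"
  shows "t j \<omega> \<in> Pi_set A t j"
proof -
  define X where "X = {\<mu> \<in> ba A. fa_integral A \<mu> (\<lambda>_. 0) \<in> (UNIV :: real set)}"
  have "X \<in> {{\<mu> \<in> ba A. fa_integral A \<mu> f \<in> U} | f U. f \<in> Bfun A \<and> open U}"
    unfolding X_def by (intro CollectI exI[of _ "\<lambda>_. 0"] exI[of _ UNIV] conjI refl Bfun_zero open_UNIV)
  moreover have "t j \<omega> \<in> X"
    unfolding X_def using pba_in_ba[OF type_space_field type_space_belief_pba[OF j]] by simp
  ultimately have "t j \<omega> \<in> topspace (weak_star_top A)"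
    unfolding weak_star_top_def topology_generated_by_topspace by (rule UnionI)
  moreover have "t j \<omega> \<in> conv_hull_sf {t j \<omega> | \<omega>. True}"
    unfolding conv_hull_sf_def
    by (intro CollectI exI[of _ "1::nat"] exI[of _ "\<lambda>_. 1"] exI[of _ "\<lambda>_. t j \<omega>"] conjI) auto
  ultimately show ?thesis
    unfolding Pi_set_def by (intro subsetD[OF closure_of_subset_Int] IntI)
qed

lemma surprise_Bfun: "k \<in> N \<Longrightarrow> F \<in> A \<Longrightarrow> surprise t k F \<in> Bfun A"
  unfolding surprise_def by (intro Bfun_diff Bfun_indicator type_space_belief_Bfun)

lemma fa_integral_surprise:
  assumes "k \<in> N" "F \<in> A" "Q \<in> pba A"
  shows "fa_integral A Q (surprise t k F) = Q F - fa_integral A Q (\<lambda>x. t k x F)"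
proof -
  have "fa_integral A Q (\<lambda>x. indicator F x - t k x F)
      = fa_integral A Q (indicator F) - fa_integral A Q (\<lambda>x. t k x F)"
    by (rule fa_integral_diff[OF type_space_field assms(3) Bfun_indicator[OF assms(2)]
          type_space_belief_Bfun[OF assms(1,2)]])
  then show ?thesis
    using fa_integral_indicator[OF type_space_field assms(3,2)] by (simp add: surprise_def)
qed

lemma fa_integral_surprise_belief:
  assumes "k \<in> N" "F \<in> A"
  shows "fa_integral A (t k \<omega>) (surprise t k F) = 0"
  using fa_integral_surprise[OF assms type_space_belief_pba[OF assms(1)]]
    fa_integral_belief_info_measurable[OF assms(1) type_space_belief_measurable[OF assms]] by simp

text \<open>The tower property \<open>\<nu>(f) = \<nu>(\<omega> \<mapsto> t k \<omega> (f))\<close>, checked on a simple approximant of \<open>f\<close>,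
  where it is the defining identity of a prior.\<close>
lemma fa_integral_nonneg_under_prior:
  assumes k: "k \<in> N" and \<nu>: "\<nu> \<in> pba A" "is_prior A t k \<nu>"
    and f: "f \<in> Bfun A" and acc: "\<forall>\<omega>. 0 \<le> fa_integral A (t k \<omega>) f"
  shows "0 \<le> fa_integral A \<nu> f"
proof (rule le_of_le_add_mult_epsilon[where K=2])
  fix \<eta> :: real
  assume "\<eta> > 0"
  then obtain F c where F: "finite F" "F \<subseteq> A" and c: "\<forall>x. \<bar>f x - simple_fun F c x\<bar> \<le> \<eta>"
    using Bfun_approx[OF f] by (metis less_imp_le)
  define \<phi> where "\<phi> = (\<lambda>\<omega>. \<Sum>E\<in>F. c E * t k \<omega> E)"
  have comp: "(\<lambda>\<omega>. c E * t k \<omega> E) \<in> Bfun A" if "E \<in> F" for E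
    using that F(2) type_space_belief_Bfun[OF k] Bfun_scale by blast
  have "fa_integral A \<nu> \<phi> = (\<Sum>E\<in>F. fa_integral A \<nu> (\<lambda>\<omega>. c E * t k \<omega> E))"
    unfolding \<phi>_def using fa_integral_sum[OF type_space_field \<nu>(1) F(1) comp] .
  also have "\<dots> = simple_int \<nu> F c"
    unfolding simple_int_def using \<nu>(2) F(2) type_space_belief_Bfun[OF k]
    by (intro sum.cong) (auto simp: is_prior_def fa_integral_scale[OF type_space_field \<nu>(1)])
  finally have "fa_integral A \<nu> \<phi> = simple_int \<nu> F c" .
  moreover have "- \<eta> \<le> \<phi> \<omega>" for \<omega>
  proof -
    have "\<bar>simple_int (t k \<omega>) F c - fa_integral A (t k \<omega>) f\<bar> \<le> \<eta>"
      by (rule fa_integral_approx[OF type_space_field type_space_belief_pba[OF k] f F c])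
    then show ?thesis
      using acc[rule_format, of \<omega>] unfolding \<phi>_def simple_int_def abs_diff_le_iff by linarith
  qed
  then have "- \<eta> \<le> fa_integral A \<nu> \<phi>"
    unfolding \<phi>_def using comp F(1) by (intro fa_integral_ge[OF type_space_field \<nu>(1)] Bfun_sum) auto
  moreover have "\<bar>simple_int \<nu> F c - fa_integral A \<nu> f\<bar> \<le> \<eta>"
    by (rule fa_integral_approx[OF type_space_field \<nu>(1) f F c])
  ultimately show "0 \<le> fa_integral A \<nu> f + 2 * \<eta>"
    by linarith
qed

lemma semi_bet_nonneg_under_prior:
  assumes f: "semi_bet N A t I f" and \<nu>: "\<nu> \<in> pba A" "\<forall>k\<in>I. is_prior A t k \<nu>"
  shows "0 \<le> fa_integral A \<nu> (\<lambda>\<omega>. \<Sum>i\<in>I. f i \<omega>)"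
proof -
  have I: "finite I" "I \<subseteq> N" and fB: "\<And>i. i \<in> I \<Longrightarrow> f i \<in> Bfun A"
    and acc: "\<And>i. i \<in> I \<Longrightarrow> \<forall>\<omega>. 0 \<le> fa_integral A (t i \<omega>) (f i)"
    using f unfolding semi_bet_iff by auto
  have "0 \<le> fa_integral A \<nu> (f i)" if "i \<in> I" for i
    using that I(2) \<nu> fB acc by (intro fa_integral_nonneg_under_prior[of i]) auto
  then have "0 \<le> (\<Sum>i\<in>I. fa_integral A \<nu> (f i))"
    by (rule sum_nonneg)
  then show ?thesis
    using fa_integral_sum[OF type_space_field \<nu>(1) I(1) fB] by simp
qed

lemma common_prior_certain_of_cc_component:
  assumes I: "I \<subseteq> N" and S: "cc_component A t I S"
    and priors: "\<forall>j\<in>I. \<forall>k\<in>I. \<forall>\<omega>. is_prior A t k (t j \<omega>)"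
  obtains \<nu> where "\<nu> \<in> pba A" "\<forall>k\<in>I. is_prior A t k \<nu>" "\<And>E. E \<in> A \<Longrightarrow> S \<subseteq> E \<Longrightarrow> \<nu> E = 1"
proof -
  have A: "is_field A"
    by (rule type_space_field)
  obtain E0 \<omega>0 where E0: "E0 \<in> A" "E0 \<subseteq> S" "\<forall>\<omega>\<in>S. \<forall>i\<in>I. t i \<omega> E0 = 1" and "\<omega>0 \<in> S"
    using S unfolding cc_component_def by blast
  show thesis
  proof (cases "I = {}")
    case True
    show thesis
    proof (rule that)
      show "(\<lambda>E. if E \<in> A then indicator E \<omega>0 else 0) \<in> pba A"
        by (rule dirac_pba[OF A])
    qed (use True \<open>\<omega>0 \<in> S\<close> in auto)
  next
    case False
    then obtain j where j: "j \<in> I"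
      by blast
    then have jN: "j \<in> N"
      using I by blast
    show thesis
    proof (rule that)
      show "t j \<omega>0 \<in> pba A" "\<forall>k\<in>I. is_prior A t k (t j \<omega>0)"
        using type_space_belief_pba[OF jN] priors j by auto
    next
      fix E
      assume "E \<in> A" "S \<subseteq> E"
      then have "t j \<omega>0 E0 \<le> t j \<omega>0 E"
        using E0(1,2) by (intro pba_mono[OF A type_space_belief_pba[OF jN]]) auto
      moreover have "t j \<omega>0 E0 = 1"
        using E0(3) \<open>\<omega>0 \<in> S\<close> j by blast
      ultimately show "t j \<omega>0 E = 1"
        using pba_le_1[OF A type_space_belief_pba[OF jN], of \<omega>0 E] by linarith
    qed
  qed
qed

subsection \<open>Money pumps\<close>

lemma ex_pba_semi_bets_nonneg_if_not_universal:
  assumes "\<not> universal_money_pump N A t" "finite J" "J \<subseteq> N"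
  shows "\<exists>P\<in>pba A. \<forall>f. semi_bet N A t J f \<longrightarrow> 0 \<le> fa_integral A P (\<lambda>\<omega>. \<Sum>i\<in>J. f i \<omega>)"
proof -
  have "\<not> (\<forall>P\<in>pba A. Inf {P E |E. E \<in> A \<and> UNIV \<subseteq> E} > 0 \<longrightarrow>
      (\<exists>f. semi_bet N A t J f \<and> fa_integral A P (\<lambda>\<omega>. \<Sum>i\<in>J. f i \<omega>) < 0))"
    using assms cc_component_UNIV[OF assms(3)] unfolding universal_money_pump_def by blast
  then show ?thesis
    by (auto simp: not_less)
qed

lemma universal_money_pump_if_money_pump:
  assumes mp: "money_pump N A t"
  shows "universal_money_pump N A t"
proof (rule ccontr)
  assume no_pump: "\<not> universal_money_pump N A t"
  obtain Pc where Pc: "\<And>J. finite J \<Longrightarrow> J \<subseteq> N \<Longrightarrow> Pc J \<in> pba A \<and>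
      (\<forall>f. semi_bet N A t J f \<longrightarrow> 0 \<le> fa_integral A (Pc J) (\<lambda>\<omega>. \<Sum>i\<in>J. f i \<omega>))"
    using ex_pba_semi_bets_nonneg_if_not_universal[OF no_pump] by metis
  have "eventually (\<lambda>J. Pc J \<in> pba A) (finite_subsets_at_top N)"
    by (rule eventually_finite_subsets_at_top_weakI) (use Pc in blast)
  then obtain P where P: "P \<in> pba A" and cluster: "\<And>Es \<eta> R. finite Es \<Longrightarrow> \<eta> > 0 \<Longrightarrow>
      eventually R (finite_subsets_at_top N) \<Longrightarrow> \<exists>J. R J \<and> (\<forall>E\<in>Es. \<bar>Pc J E - P E\<bar> < \<eta>)"
    using pba_cluster_point[OF type_space_field finite_subsets_at_top_neq_bot] by blast
  obtain I f where f: "semi_bet N A t I f" and neg: "fa_integral A P (\<lambda>\<omega>. \<Sum>i\<in>I. f i \<omega>) < 0"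
    using mp P unfolding money_pump_def by blast
  define g where "g = (\<lambda>\<omega>. \<Sum>i\<in>I. f i \<omega>)"
  have I: "finite I" "I \<subseteq> N" and fB: "\<And>i. i \<in> I \<Longrightarrow> f i \<in> Bfun A"
    using f unfolding semi_bet_iff by auto
  have "g \<in> Bfun A"
    unfolding g_def using I(1) fB by (rule Bfun_sum)
  moreover have "0 < - fa_integral A P g"
    using neg unfolding g_def by simp
  ultimately obtain Es \<delta> where "finite Es" "\<delta> > 0" and cont: "\<And>Q P'. Q \<in> pba A \<Longrightarrow> P' \<in> pba A \<Longrightarrow>
      \<forall>E\<in>Es. \<bar>Q E - P' E\<bar> < \<delta> \<Longrightarrow> \<bar>fa_integral A Q g - fa_integral A P' g\<bar> < - fa_integral A P g"
    by (rule fa_integral_setwise_continuous[OF type_space_field]) (rule that)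
  have "eventually (\<lambda>J. finite J \<and> J \<subseteq> N \<and> I \<subseteq> J) (finite_subsets_at_top N)"
    unfolding eventually_finite_subsets_at_top by (intro exI[of _ I]) (use I in auto)
  from cluster[OF \<open>finite Es\<close> \<open>\<delta> > 0\<close> this] obtain J
    where J: "finite J" "J \<subseteq> N" "I \<subseteq> J" and close: "\<forall>E\<in>Es. \<bar>Pc J E - P E\<bar> < \<delta>"
    by blast
  have "0 \<le> fa_integral A (Pc J) (\<lambda>\<omega>. \<Sum>i\<in>J. if i \<in> I then f i \<omega> else 0)"
    using conjunct2[OF Pc[OF J(1,2)], rule_format, OF semi_bet_extend(1)[OF f J]] by simp
  then have "0 \<le> fa_integral A (Pc J) g"
    unfolding g_def semi_bet_extend(2)[OF f J] .
  moreover have "\<bar>fa_integral A (Pc J) g - fa_integral A P g\<bar> < - fa_integral A P g"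
    using cont[OF _ P close] Pc[OF J(1,2)] by blast
  ultimately show False
    by linarith
qed

text \<open>Offer \<open>k\<close> alone the surprise, with the sign that makes it cost nothing under \<open>P\<close>.\<close>
lemma strong_money_pump_if_not_prior:
  assumes I: "finite I" "I \<subseteq> N" and jk: "j \<in> I" "k \<in> I" and not_prior: "\<not> is_prior A t k (t j \<omega>)"
  shows "strong_money_pump N A t"
  unfolding strong_money_pump_def
proof (intro exI[of _ I] conjI ballI I)
  have A: "is_field A" and kN: "k \<in> N" and jN: "j \<in> N"
    using type_space_field I jk by auto
  obtain F where F: "F \<in> A" and surprise_j: "fa_integral A (t j \<omega>) (surprise t k F) \<noteq> 0"
    using not_prior fa_integral_surprise[OF kN _ type_space_belief_pba[OF jN]]
    unfolding is_prior_def by auto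
  fix P
  assume P: "P \<in> pba A"
  define s :: real where "s = (if fa_integral A P (surprise t k F) \<le> 0 then 1 else -1)"
  define g where "g = (\<lambda>x. s * surprise t k F x)"
  have g: "g \<in> Bfun A" "\<forall>\<omega>'. 0 \<le> fa_integral A (t k \<omega>') g"
    unfolding g_def using Bfun_scale[OF surprise_Bfun[OF kN F]]
      fa_integral_scale[OF A type_space_belief_pba[OF kN] surprise_Bfun[OF kN F]]
      fa_integral_surprise_belief[OF kN F] by auto
  have "fa_integral A P g \<le> 0"
    unfolding g_def fa_integral_scale[OF A P surprise_Bfun[OF kN F]] s_def by (simp add: mult_le_0_iff)
  moreover have "fa_integral A (t j \<omega>) g \<noteq> 0"
    unfolding g_def fa_integral_scale[OF A type_space_belief_pba[OF jN] surprise_Bfun[OF kN F]] s_def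
    using surprise_j by simp
  moreover have "t j \<omega> \<in> {P} \<union> (\<Union>i\<in>I. Pi_set A t i)"
    using belief_in_Pi_set[OF jN] jk(1) by blast
  ultimately show "\<exists>f. semi_bet N A t I f \<and> fa_integral A P (\<lambda>\<omega>. \<Sum>i\<in>I. f i \<omega>) \<le> 0 \<and>
      (\<exists>P'\<in>{P} \<union> (\<Union>i\<in>I. Pi_set A t i). fa_integral A P' (\<lambda>\<omega>. \<Sum>i\<in>I. f i \<omega>) \<noteq> 0)"
    using semi_bet_single_bettor[OF I jk(2) g] by (intro exI[of _ "\<lambda>i x. if i = k then g x else 0"]) auto
qed

lemma strong_money_pump_if_universal_money_pump:
  assumes "universal_money_pump N A t"
  shows "strong_money_pump N A t"
proof -
  obtain I S where I: "finite I" "I \<subseteq> N" and S: "cc_component A t I S"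
    and pump: "\<forall>P\<in>pba A. Inf {P E |E. E \<in> A \<and> S \<subseteq> E} > 0 \<longrightarrow>
        (\<exists>f. semi_bet N A t I f \<and> fa_integral A P (\<lambda>\<omega>. \<Sum>i\<in>I. f i \<omega>) < 0)"
    using assms unfolding universal_money_pump_def by blast
  show ?thesis
  proof (cases "\<forall>j\<in>I. \<forall>k\<in>I. \<forall>\<omega>. is_prior A t k (t j \<omega>)")
    case True
    then obtain \<nu> where \<nu>: "\<nu> \<in> pba A" "\<forall>k\<in>I. is_prior A t k \<nu>"
      and certain: "\<And>E. E \<in> A \<Longrightarrow> S \<subseteq> E \<Longrightarrow> \<nu> E = 1"
      by (rule common_prior_certain_of_cc_component[OF I(2) S]) (rule that)
    have "Inf {\<nu> E |E. E \<in> A \<and> S \<subseteq> E} = 1"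
      using Inf_supersets_eq_1[OF is_field_UNIV[OF type_space_field] certain] .
    then obtain f where "semi_bet N A t I f" "fa_integral A \<nu> (\<lambda>\<omega>. \<Sum>i\<in>I. f i \<omega>) < 0"
      using pump \<nu>(1) by auto
    with semi_bet_nonneg_under_prior[OF _ \<nu>] show ?thesis
      by (meson not_le)
  next
    case False
    then show ?thesis
      using strong_money_pump_if_not_prior[OF I] by blast
  qed
qed

end

theorem proposition8:
  fixes N :: "'i set" and A :: "'w set set" and M :: "'i \<Rightarrow> 'w set set"
    and t :: "'i \<Rightarrow> 'w \<Rightarrow> 'w set \<Rightarrow> real"
  assumes "type_space N A M t"
  shows "(money_pump N A t \<longrightarrow> universal_money_pump N A t) \<and>
         (universal_money_pump N A t \<longrightarrow> strong_money_pump N A t)"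
  using universal_money_pump_if_money_pump[OF assms] strong_money_pump_if_universal_money_pump[OF assms]
  by blast

end
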